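(* Let $\phi_1,\dots,\phi_k\in C^\infty(\mathbb R^n)$, $\widetilde J=(\phi_1,\dots,\phi_k)$, and assume $\{x:\wedge^kD\widetilde J(x)=0\}$ has Lebesgue measure zero. Let $Y$ be a complete vector field on $\mathbb R^n$ tangent to each level set $\widetilde\Sigma_\lambda=\widetilde J^{-1}(\lambda)$, and for regular $\lambda$ let $Y^\lambda=(i^\lambda_* )^{-1}\circ Y|_{\widetilde\Sigma_\lambda}$. Then quantization and reduction commute strongly on $J_Y(x,\xi)=\langle Y(x),\xi\rangle$: for every $\hbar\neq0$, $u\in C_c^\infty(\mathbb R^n)$ and every point $z$ with $\wedge^kD\widetilde J(z)\neq0$, writing $\lambda=\widetilde J(z)$, $$\rho(z)^{-1/2}\Big[-i\hbar\big(Y^{\lambda}+\tfrac12\mathrm{div}\,Y^{\lambda}\big)\big(\rho^{1/2}u|_{\widetilde\Sigma_{\lambda}}\big)\Big](z)=\Big[-i\hbar\big(Y+\tfrac12\mathrm{div}\,Y\big)u\Big](z),$$ that is, $\mathrm{Op}_\hbar(J_Y)u=T_x^*\Big[\int^\oplus_{\widetilde J(\mathbb R^n)}\mathrm{Op}^\lambda_\hbar(J_{Y^\lambda})\,d\lambda\Big]T_xu$.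
   Context: $\rho(x)=\|\wedge^kD\widetilde J(x)\|^{-1}$ (operator norm of the induced map $\wedge^k\mathbb R^n\to\wedge^k\mathbb R^k\cong\mathbb R$). $T_x$ is the unitary from $L^2(\mathbb R^n)$ to $\int^\oplus L^2(\widetilde\Sigma_\lambda,\eta_\lambda)\,d\lambda$ (over regular values in $\widetilde J(\mathbb R^n)$, $\eta_\lambda$ the Riemannian volume of $\widetilde\Sigma_\lambda$) given by $[T_xu(\lambda)](z)=\rho(z)^{1/2}u(z)$. $\mathrm{Op}_\hbar$ is the Weyl quantization on $\mathbb R^{2n}$, for which $\mathrm{Op}_\hbar(J_Y)=-i\hbar(Y+\frac12\mathrm{div}\,Y)$. For a Riemannian manifold $M$ and complete vector field $X$ on $M$, the Weyl–Landsman quantization of $J_X(m,\xi)=\langle X(m),\xi\rangle_m$ on $L^2(M)$ is $\mathrm{Op}^M_\hbar(J_X)=-i\hbar(X+\frac12\mathrm{div}\,X)$ (Riemannian divergence); $\mathrm{Op}^\lambda_\hbar$ denotes this for $M=\widetilde\Sigma_\lambda$. Under the identification of the reduced space of $\{\phi_j(x)\}$ at $\lambda$ with $T^*\widetilde\Sigma_\lambda$, the reduced function of $J_Y$ is $J_{Y^\lambda}$. *)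

theory Defs
  imports "HOL-Analysis.Analysis"
begin

text \<open>Iterated directional (Frechet) derivatives; C-infinity smoothness means that all
  of them exist (are Frechet differentiable) everywhere.\<close>
fun iter_dd :: "('a::real_normed_vector \<Rightarrow> 'b::real_normed_vector) \<Rightarrow> 'a list \<Rightarrow> 'a \<Rightarrow> 'b" where
  "iter_dd f [] = f"
| "iter_dd f (v # vs) = (\<lambda>x. frechet_derivative (iter_dd f vs) (at x) v)"

definition smooth :: "('a::real_normed_vector \<Rightarrow> 'b::real_normed_vector) \<Rightarrow> bool" where
  "smooth f \<longleftrightarrow> (\<forall>vs x. iter_dd f vs differentiable (at x))"

definition supp :: "('a::topological_space \<Rightarrow> 'b::zero) \<Rightarrow> 'a set" where
  "supp f = closure {x. f x \<noteq> 0}"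

definition grad_comp :: "(real^'n \<Rightarrow> real^'k) \<Rightarrow> 'k \<Rightarrow> real^'n \<Rightarrow> real^'n" where
  "grad_comp J j x = (\<chi> l. frechet_derivative J (at x) (axis l 1) $ j)"

text \<open>Norm of the covector wedge^k DJ(x) = d phi_1 /\ ... /\ d phi_k, i.e. the operator
  norm of wedge^k DJ(x) : wedge^k R^n -> R, computed as the square root of the Gram
  determinant of the gradients.\<close>
definition wedge_norm :: "(real^'n \<Rightarrow> real^'k) \<Rightarrow> real^'n \<Rightarrow> real" where
  "wedge_norm J x = sqrt (det (\<chi> i j. grad_comp J i x \<bullet> grad_comp J j x))"

definition rho :: "(real^'n \<Rightarrow> real^'k) \<Rightarrow> real^'n \<Rightarrow> real" where
  "rho J x = inverse (wedge_norm J x)"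

definition level_set :: "(real^'n \<Rightarrow> real^'k) \<Rightarrow> real^'k \<Rightarrow> (real^'n) set" where
  "level_set J lam = J -` {lam}"

definition tangent_space :: "(real^'n \<Rightarrow> real^'k) \<Rightarrow> real^'n \<Rightarrow> (real^'n) set" where
  "tangent_space J z = {v. frechet_derivative J (at z) v = 0}"

definition tangent_onb :: "(real^'n \<Rightarrow> real^'k) \<Rightarrow> real^'n \<Rightarrow> (real^'n) set" where
  "tangent_onb J z = (SOME B. B \<subseteq> tangent_space J z \<and> pairwise orthogonal B
      \<and> (\<forall>e\<in>B. norm e = 1) \<and> span B = tangent_space J z)"

definition div_euc :: "(real^'n \<Rightarrow> real^'n) \<Rightarrow> real^'n \<Rightarrow> real" where
  "div_euc Y z = (\<Sum>i\<in>Basis. frechet_derivative Y (at z) i \<bullet> i)"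

text \<open>Riemannian divergence of the restriction Y^lambda of a tangent vector field Y to the
  level set through the regular point z (induced metric): trace of the Levi-Civita
  covariant derivative, which for an embedded submanifold is the tangential projection
  of the ambient derivative (Gauss formula): sum over an orthonormal basis e of T_z Sigma
  of  e . (DY(z) e).\<close>
definition div_level :: "(real^'n \<Rightarrow> real^'k) \<Rightarrow> (real^'n \<Rightarrow> real^'n) \<Rightarrow> real^'n \<Rightarrow> real" where
  "div_level J Y z = (\<Sum>e\<in>tangent_onb J z. e \<bullet> (frechet_derivative Y (at z) e))"

text \<open>Phi is the (global) flow of Y: Y is complete.\<close>
definition is_flow :: "(real^'n \<Rightarrow> real^'n) \<Rightarrow> (real \<Rightarrow> real^'n \<Rightarrow> real^'n) \<Rightarrow> bool" where
  "is_flow Y Phi \<longleftrightarrow> (\<forall>x. Phi 0 x = x) \<and>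
     (\<forall>t x. ((\<lambda>s. Phi s x) has_vector_derivative Y (Phi t x)) (at t))"

text \<open>The vector field Y^lambda acting on a function f defined on the level set
  Sigma_lambda (lambda = J z), evaluated at z: derivative of f along the integral curve
  of Y through z, which stays in Sigma_lambda. Only values of f on Sigma_lambda are used.\<close>
definition vf_level :: "(real \<Rightarrow> real^'n \<Rightarrow> real^'n) \<Rightarrow> (real^'n \<Rightarrow> complex) \<Rightarrow> real^'n \<Rightarrow> complex" where
  "vf_level Phi f z = vector_derivative (\<lambda>t. f (Phi t z)) (at 0)"

end

theory Submission
  imports Defs
begin

text \<open>Write \<open>M\<close> and \<open>L\<close> for the Jacobians of \<open>J\<close> and \<open>Y\<close> at the regular point \<open>z\<close>, and
  \<open>P = M\<^sup>T (M M\<^sup>T)\<^sup>-\<^sup>1 M\<close> for the orthogonal projection onto the normal space of the level set.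
  The divergence of \<open>Y\<^sup>\<lambda>\<close> is the trace of \<open>L\<close> compressed to \<open>ker M\<close>, i.e. \<open>div Y - tr (L P)\<close>.
  Differentiating the tangency condition \<open>DJ(x) Y(x) = 0\<close> and using the symmetry of second
  derivatives shows that the Gram matrix \<open>M M\<^sup>T\<close> changes along \<open>Y\<close> at the rate \<open>-(A + A\<^sup>T)\<close>,
  \<open>A = M L M\<^sup>T\<close>; by Jacobi's formula \<open>det (M M\<^sup>T)\<close> changes at the rate \<open>-2 tr (L P) det (M M\<^sup>T)\<close>.
  Since \<open>\<rho>\<^sup>1\<^sup>/\<^sup>2 = det (M M\<^sup>T)\<^sup>-\<^sup>1\<^sup>/\<^sup>4\<close>, this gives \<open>Y \<rho>\<^sup>1\<^sup>/\<^sup>2 = tr (L P) \<rho>\<^sup>1\<^sup>/\<^sup>2 / 2\<close>, and the product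
  rule turns the left-hand side into \<open>Y u + (tr (L P) + div Y - tr (L P)) u / 2\<close>.

  The identity is pointwise at a regular point.\<close>

section \<open>Symmetry of second derivatives\<close>

lemma second_difference_mvt:
  fixes f :: "'a::real_normed_vector \<Rightarrow> real"
  assumes df: "\<And>x. (f has_derivative Df x) (at x)" and s: "s > 0"
  obtains \<theta> where "0 < \<theta>" "\<theta> < s"
    "f (z + s *\<^sub>R v + s *\<^sub>R w) - f (z + s *\<^sub>R v) - f (z + s *\<^sub>R w) + f z
       = s * (Df (z + s *\<^sub>R w + \<theta> *\<^sub>R v) v - Df (z + \<theta> *\<^sub>R v) v)"
proof -
  define \<psi> where "\<psi> t = f (z + s *\<^sub>R w + t *\<^sub>R v) - f (z + t *\<^sub>R v)" for t
  have along_line: "((\<lambda>t. f (a + t *\<^sub>R v)) has_derivative (\<lambda>h. h * Df (a + t *\<^sub>R v) v)) (at t)"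
    for a t
  proof -
    have "((\<lambda>t. a + t *\<^sub>R v) has_derivative (\<lambda>h. h *\<^sub>R v)) (at t)"
      by (auto intro!: derivative_eq_intros)
    from has_derivative_compose[OF this df] show ?thesis
      using has_derivative_linear[OF df] by (simp add: linear_scale)
  qed
  have der: "(\<psi> has_derivative
      (\<lambda>h. h * (Df (z + s *\<^sub>R w + t *\<^sub>R v) v - Df (z + t *\<^sub>R v) v))) (at t)" for t
    unfolding \<psi>_def
    by (rule has_derivative_eq_rhs[OF has_derivative_diff[OF along_line along_line]])
      (simp add: right_diff_distrib)
  have "continuous_on {0..s} \<psi>"
    using der by (meson continuous_at_imp_continuous_on has_derivative_continuous)
  from mvt[OF s this der] obtain \<theta> where "0 < \<theta>" "\<theta> < s"
    "\<psi> s - \<psi> 0 = (s - 0) * (Df (z + s *\<^sub>R w + \<theta> *\<^sub>R v) v - Df (z + \<theta> *\<^sub>R v) v)"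
    by metis
  moreover have "z + s *\<^sub>R w + s *\<^sub>R v = z + s *\<^sub>R v + s *\<^sub>R w"
    by (simp add: algebra_simps)
  ultimately show ?thesis by (intro that) (simp_all add: \<psi>_def, linarith)
qed

lemma second_difference_estimate:
  fixes f :: "'a::real_normed_vector \<Rightarrow> real"
  assumes df: "\<And>x. (f has_derivative Df x) (at x)"
    and hv: "((\<lambda>x. Df x v) has_derivative Hv) (at z)"
    and e: "e > 0"
  shows "\<exists>s0>0. \<forall>s. 0 < s \<and> s < s0 \<longrightarrow>
     \<bar>f (z + s *\<^sub>R v + s *\<^sub>R w) - f (z + s *\<^sub>R v) - f (z + s *\<^sub>R w) + f z - s\<^sup>2 * Hv w\<bar>
       \<le> 2 * e * s\<^sup>2 * (norm v + norm w)"
proof -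
  from hv[unfolded has_derivative_at_alt] e obtain d where d: "d > 0"
    and close: "\<And>y. norm (y - z) < d \<Longrightarrow> \<bar>Df y v - Df z v - Hv (y - z)\<bar> \<le> e * norm (y - z)"
    and "bounded_linear Hv"
    by (metis real_norm_def)
  then have linH: "linear Hv" using bounded_linear.linear by blast
  define C where "C = norm v + norm w"
  have C0: "C \<ge> 0" by (simp add: C_def)
  show ?thesis
  proof (intro exI[of _ "d / (C + 1)"] conjI allI impI)
    show "d / (C + 1) > 0" using d C0 by simp
    fix s :: real assume "0 < s \<and> s < d / (C + 1)"
    then have s0: "s > 0" and sC: "s * C < d"
      using C0 d by (auto simp: field_simps)
    obtain \<theta> where \<theta>: "0 < \<theta>" "\<theta> < s"
      and mv: "f (z + s *\<^sub>R v + s *\<^sub>R w) - f (z + s *\<^sub>R v) - f (z + s *\<^sub>R w) + f z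
       = s * (Df (z + s *\<^sub>R w + \<theta> *\<^sub>R v) v - Df (z + \<theta> *\<^sub>R v) v)"
      using second_difference_mvt[OF df s0] by metis
    define y1 where "y1 = s *\<^sub>R w + \<theta> *\<^sub>R v"
    define y2 where "y2 = \<theta> *\<^sub>R v"
    have n1: "norm y1 \<le> s * C"
    proof -
      have "norm y1 \<le> s * norm w + \<theta> * norm v" unfolding y1_def
        using \<theta> s0 by (smt (verit) norm_scaleR norm_triangle_ineq abs_of_pos)
      also have "\<dots> \<le> s * C" unfolding C_def using \<theta> by (simp add: algebra_simps mult_right_mono)
      finally show ?thesis .
    qed
    have n2: "norm y2 \<le> s * C"
      unfolding y2_def C_def using \<theta> by (simp add: algebra_simps mult_right_mono add_increasing2)
    have b1: "\<bar>Df (z + y1) v - Df z v - Hv y1\<bar> \<le> e * norm y1"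
      using close[of "z + y1"] n1 sC by simp
    have b2: "\<bar>Df (z + y2) v - Df z v - Hv y2\<bar> \<le> e * norm y2"
      using close[of "z + y2"] n2 sC by simp
    have "Hv y1 - Hv y2 = s * Hv w"
      unfolding y1_def y2_def using linH by (simp add: linear_add linear_scale)
    then have "\<bar>(Df (z + y1) v - Df (z + y2) v) - s * Hv w\<bar> \<le> e * norm y1 + e * norm y2"
      using b1 b2 by linarith
    also have "\<dots> \<le> 2 * e * (s * C)"
      using mult_left_mono[OF n1, of e] mult_left_mono[OF n2, of e] e by linarith
    finally have "s * \<bar>(Df (z + y1) v - Df (z + y2) v) - s * Hv w\<bar> \<le> s * (2 * e * (s * C))"
      using s0 by (simp add: mult_left_mono)
    moreover have "\<bar>s * ((Df (z + y1) v - Df (z + y2) v) - s * Hv w)\<bar>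
        = s * \<bar>(Df (z + y1) v - Df (z + y2) v) - s * Hv w\<bar>"
      using s0 by (simp add: abs_mult)
    ultimately show "\<bar>f (z + s *\<^sub>R v + s *\<^sub>R w) - f (z + s *\<^sub>R v) - f (z + s *\<^sub>R w) + f z - s\<^sup>2 * Hv w\<bar>
       \<le> 2 * e * s\<^sup>2 * (norm v + norm w)"
      unfolding mv C_def y1_def y2_def
      by (simp add: power2_eq_square right_diff_distrib add.assoc mult.assoc mult.left_commute)
  qed
qed

lemma second_derivative_symmetric_real:
  fixes f :: "'a::real_normed_vector \<Rightarrow> real"
  assumes df: "\<And>x. (f has_derivative Df x) (at x)"
    and hv: "((\<lambda>x. Df x v) has_derivative Hv) (at z)"
    and hw: "((\<lambda>x. Df x w) has_derivative Hw) (at z)"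
  shows "Hv w = Hw v"
proof -
  define C where "C = norm v + norm w"
  have bound: "\<bar>Hv w - Hw v\<bar> \<le> 4 * e * C" if e: "e > 0" for e
  proof -
    obtain s1 where "s1 > 0" and S1: "\<And>s. 0 < s \<Longrightarrow> s < s1 \<Longrightarrow>
     \<bar>f (z + s *\<^sub>R v + s *\<^sub>R w) - f (z + s *\<^sub>R v) - f (z + s *\<^sub>R w) + f z - s\<^sup>2 * Hv w\<bar>
       \<le> 2 * e * s\<^sup>2 * C"
      using second_difference_estimate[OF df hv e, of w] unfolding C_def by blast
    obtain s2 where "s2 > 0" and S2: "\<And>s. 0 < s \<Longrightarrow> s < s2 \<Longrightarrow>
     \<bar>f (z + s *\<^sub>R w + s *\<^sub>R v) - f (z + s *\<^sub>R w) - f (z + s *\<^sub>R v) + f z - s\<^sup>2 * Hw v\<bar>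
       \<le> 2 * e * s\<^sup>2 * C"
      using second_difference_estimate[OF df hw e, of v] unfolding C_def by (metis add.commute)
    define s where "s = min s1 s2 / 2"
    have s: "0 < s" "s < s1" "s < s2" using \<open>s1 > 0\<close> \<open>s2 > 0\<close> by (auto simp: s_def)
    have "z + s *\<^sub>R w + s *\<^sub>R v = z + s *\<^sub>R v + s *\<^sub>R w" by (simp add: algebra_simps)
    with S2[OF s(1,3)] have "\<bar>f (z + s *\<^sub>R v + s *\<^sub>R w) - f (z + s *\<^sub>R w) - f (z + s *\<^sub>R v) + f z
        - s\<^sup>2 * Hw v\<bar> \<le> 2 * e * s\<^sup>2 * C"
      by simp
    with S1[OF s(1,2)] have "\<bar>s\<^sup>2 * Hv w - s\<^sup>2 * Hw v\<bar> \<le> 4 * e * s\<^sup>2 * C"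
      by linarith
    then have "s\<^sup>2 * \<bar>Hv w - Hw v\<bar> \<le> s\<^sup>2 * (4 * e * C)"
      by (simp add: abs_mult flip: right_diff_distrib) (simp add: algebra_simps)
    then show ?thesis using s(1) by simp
  qed
  show ?thesis
  proof (rule ccontr)
    assume ne: "Hv w \<noteq> Hw v"
    have C0: "C \<ge> 0" by (simp add: C_def)
    define e where "e = \<bar>Hv w - Hw v\<bar> / (8 * (C + 1))"
    have "e > 0" using ne C0 by (simp add: e_def)
    have "\<bar>Hv w - Hw v\<bar> \<le> 4 * e * C" by (rule bound[OF \<open>e > 0\<close>])
    also have "\<dots> < \<bar>Hv w - Hw v\<bar>" using ne C0 unfolding e_def
      by (simp add: field_simps) (smt (verit) mult_nonneg_nonneg abs_ge_zero)
    finally show False by simp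
  qed
qed

lemma smooth_has_derivative:
  assumes "smooth f"
  shows "(f has_derivative frechet_derivative f (at x)) (at x)"
  using assms unfolding smooth_def by (metis iter_dd.simps(1) frechet_derivative_works)

lemma smooth_differentiable: "smooth f \<Longrightarrow> f differentiable (at x)"
  using smooth_has_derivative differentiable_def by blast

lemma smooth_directional_derivative_has_derivative:
  assumes "smooth f"
  shows "((\<lambda>x. frechet_derivative f (at x) v) has_derivative
           frechet_derivative (\<lambda>x. frechet_derivative f (at x) v) (at y)) (at y)"
proof -
  have "iter_dd f [v] differentiable (at y)" using assms unfolding smooth_def by blast
  then show ?thesis by (simp add: frechet_derivative_works)
qed

definition second_derivative ::
    "('a::real_normed_vector \<Rightarrow> 'b::real_normed_vector) \<Rightarrow> 'a \<Rightarrow> 'a \<Rightarrow> 'a \<Rightarrow> 'b"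
  where "second_derivative f z v w = frechet_derivative (\<lambda>x. frechet_derivative f (at x) v) (at z) w"

lemma smooth_second_derivative_has_derivative:
  assumes "smooth f"
  shows "((\<lambda>x. frechet_derivative f (at x) v) has_derivative second_derivative f z v) (at z)"
  using smooth_directional_derivative_has_derivative[OF assms]
  by (simp add: second_derivative_def[abs_def])

lemma smooth_second_derivative_symmetric:
  fixes f :: "'a::real_normed_vector \<Rightarrow> 'b::euclidean_space"
  assumes "smooth f"
  shows "second_derivative f z v w = second_derivative f z w v"
proof (rule euclidean_eqI)
  fix b :: 'b
  have df: "((\<lambda>x. f x \<bullet> b) has_derivative (\<lambda>h. frechet_derivative f (at x) h \<bullet> b)) (at x)"
    for x
    using bounded_linear.has_derivative[OF bounded_linear_inner_left smooth_has_derivative[OF assms]] .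
  have d2f: "((\<lambda>x. frechet_derivative f (at x) v \<bullet> b) has_derivative
      (\<lambda>h. second_derivative f z v h \<bullet> b)) (at z)" for v
    using bounded_linear.has_derivative[OF bounded_linear_inner_left
        smooth_second_derivative_has_derivative[OF assms]] .
  show "second_derivative f z v w \<bullet> b = second_derivative f z w v \<bullet> b"
    by (rule second_derivative_symmetric_real[OF df d2f d2f])
qed

lemma linear_sum_Basis:
  fixes f :: "'a::euclidean_space \<Rightarrow> 'b::real_vector"
  assumes "linear f"
  shows "(\<Sum>b\<in>Basis. (x \<bullet> b) *\<^sub>R f b) = f x"
proof -
  have "(\<Sum>b\<in>Basis. (x \<bullet> b) *\<^sub>R f b) = f (\<Sum>b\<in>Basis. (x \<bullet> b) *\<^sub>R b)"
    using assms by (simp add: linear_sum linear_scale)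
  then show ?thesis by (simp add: euclidean_representation)
qed

lemma tangent_field_second_derivative:
  fixes J :: "'a::euclidean_space \<Rightarrow> 'b::euclidean_space" and Y :: "'a \<Rightarrow> 'a"
  assumes J: "smooth J" and Y: "Y differentiable (at z)"
    and tangent: "\<And>x. frechet_derivative J (at x) (Y x) = 0"
  shows "second_derivative J z v (Y z) = - frechet_derivative J (at z) (frechet_derivative Y (at z) v)"
proof -
  define DJ where "DJ x = frechet_derivative J (at x)" for x
  define DY where "DY = frechet_derivative Y (at z)"
  define H where "H = second_derivative J z"
  have linDJ: "linear (DJ x)" for x
    unfolding DJ_def using smooth_has_derivative[OF J] has_derivative_linear by blast
  have hasH: "((\<lambda>x. DJ x b) has_derivative H b) (at z)" for b
    unfolding DJ_def H_def by (rule smooth_second_derivative_has_derivative[OF J])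
  have linH: "linear (H v)" using hasH has_derivative_linear by blast
  have hasY: "(Y has_derivative DY) (at z)"
    using Y unfolding DY_def by (simp add: frechet_derivative_works)
  have zero: "(\<lambda>x. \<Sum>b\<in>Basis. (Y x \<bullet> b) *\<^sub>R DJ x b) = (\<lambda>x. 0)"
    unfolding linear_sum_Basis[OF linDJ] using tangent by (simp add: DJ_def)
  have "((\<lambda>x. \<Sum>b\<in>Basis. (Y x \<bullet> b) *\<^sub>R DJ x b) has_derivative
      (\<lambda>w. \<Sum>b\<in>Basis. (Y z \<bullet> b) *\<^sub>R H b w + (DY w \<bullet> b) *\<^sub>R DJ z b)) (at z)"
    by (intro has_derivative_sum has_derivative_scaleR has_derivative_inner_left hasY hasH)
  from has_derivative_unique[OF this[unfolded zero] has_derivative_const]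
  have "(\<Sum>b\<in>Basis. (Y z \<bullet> b) *\<^sub>R H b v) + (\<Sum>b\<in>Basis. (DY v \<bullet> b) *\<^sub>R DJ z b) = 0"
    by (auto simp: fun_eq_iff sum.distrib)
  moreover have "H b v = H v b" for b
    unfolding H_def by (rule smooth_second_derivative_symmetric[OF J])
  ultimately have "H v (Y z) + DJ z (DY v) = 0"
    by (simp add: linear_sum_Basis[OF linH] linear_sum_Basis[OF linDJ])
  then show ?thesis
    by (simp add: H_def DJ_def DY_def eq_neg_iff_add_eq_0)
qed

lemma matrix_inv_right: "invertible A \<Longrightarrow> A ** matrix_inv A = mat 1"
  and matrix_inv_left: "invertible A \<Longrightarrow> matrix_inv A ** A = mat 1"
  unfolding invertible_def matrix_inv_def by (metis (mono_tags, lifting) someI_ex)+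

lemma matrix_mul_lneg: "(- A) ** B = - (A ** (B :: 'a::ring_1^'n^'m))"
  by (simp add: vec_eq_iff matrix_matrix_mult_def sum_negf)

lemma matrix_mul_rneg: "A ** (- B) = - ((A :: 'a::ring_1^'n^'m) ** B)"
  by (simp add: vec_eq_iff matrix_matrix_mult_def sum_negf)

lemma transpose_neg: "transpose (- A) = - transpose (A :: 'a::ring_1^'n^'m)"
  by (simp add: vec_eq_iff transpose_def)

lemma trace_neg: "trace (- A) = - trace (A :: 'a::comm_ring_1^'n^'n)"
  by (simp add: trace_def sum_negf)

lemma trace_transpose: "trace (transpose A) = trace A"
  by (simp add: trace_def transpose_def)

lemma sum_Basis_vec: "(\<Sum>b\<in>(Basis::(real^'n) set). F b) = (\<Sum>i\<in>UNIV. F (axis i 1))"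
proof -
  have B: "(Basis::(real^'n) set) = range (\<lambda>i::'n. axis i 1)" by (auto simp: Basis_vec_def)
  have "inj (\<lambda>i::'n. axis i (1::real))" by (auto simp: inj_def axis_eq_axis)
  then show ?thesis unfolding B by (simp add: sum.reindex)
qed

lemma trace_eq_sum_Basis:
  fixes A :: "real^'n^'n"
  shows "trace A = (\<Sum>b\<in>Basis. b \<bullet> (A *v b))"
  unfolding sum_Basis_vec trace_def
  by (simp add: inner_axis' matrix_vector_mult_basis column_def)

lemma transpose_matrix_inv_symmetric:
  fixes G :: "real^'k^'k"
  assumes "transpose G = G" and "invertible G"
  shows "transpose (matrix_inv G) = matrix_inv G"
proof -
  have "transpose (matrix_inv G) ** G = mat 1"
    using arg_cong[OF matrix_inv_right[OF assms(2)], of transpose] assms(1)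
    by (simp add: matrix_transpose_mul transpose_mat)
  then have "transpose (matrix_inv G) = transpose (matrix_inv G) ** (G ** matrix_inv G)"
    using matrix_inv_right[OF assms(2)] by simp
  also have "\<dots> = matrix_inv G"
    using \<open>transpose (matrix_inv G) ** G = mat 1\<close> by (simp add: matrix_mul_assoc)
  finally show ?thesis .
qed

section \<open>Jacobi's formula\<close>

lemma det_has_derivative_rowwise:
  fixes G :: "'a::real_normed_vector \<Rightarrow> real^'k^'k"
  assumes d: "\<And>i j. ((\<lambda>x. G x $ i $ j) has_derivative Dg i j) (at z)"
  shows "((\<lambda>x. det (G x)) has_derivative
     (\<lambda>w. \<Sum>i\<in>UNIV. det (\<chi> a b. if a = i then Dg a b w else G z $ a $ b))) (at z)"
proof -
  let ?P = "{p. p permutes (UNIV::'k set)}"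
  have "((\<lambda>x. \<Sum>p\<in>?P. of_int (sign p) * (\<Prod>i\<in>UNIV. G x $ i $ p i)) has_derivative
     (\<lambda>w. \<Sum>p\<in>?P. of_int (sign p) *
        (\<Sum>i\<in>UNIV. Dg i (p i) w * (\<Prod>a\<in>UNIV - {i}. G z $ a $ p a)))) (at z)"
    by (intro has_derivative_sum has_derivative_mult_right has_derivative_prod d)
  moreover have "det (\<chi> a b. if a = i then Dg a b w else G z $ a $ b) =
      (\<Sum>p\<in>?P. of_int (sign p) * (Dg i (p i) w * (\<Prod>a\<in>UNIV - {i}. G z $ a $ p a)))" for i w
  proof -
    have "(\<Prod>a\<in>UNIV. (if a = i then Dg a (p a) w else G z $ a $ p a)) =
         Dg i (p i) w * (\<Prod>a\<in>UNIV - {i}. G z $ a $ p a)" for p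
      by (subst prod.remove[of _ i]) (auto intro!: prod.cong)
    then show ?thesis unfolding det_def by simp
  qed
  ultimately show ?thesis
    unfolding det_def by (simp add: sum_distrib_left) (subst sum.swap, simp)
qed

lemma sum_det_replace_row_mult:
  fixes G C :: "real^'k^'k"
  shows "(\<Sum>i\<in>UNIV. det (\<chi> a b. if a = i then (C ** G) $ a $ b else G $ a $ b)) = trace C * det G"
proof -
  have "det (\<chi> a b. if a = i then (C ** G) $ a $ b else G $ a $ b) = C $ i $ i * det G" for i
  proof -
    have "(\<chi> a b. if a = i then (C ** G) $ a $ b else G $ a $ b) =
      (\<chi> a. if a = i then sum (\<lambda>c. (row i C) $ c *s row c G) UNIV else row a G)"
      by (auto simp: vec_eq_iff row_def matrix_matrix_mult_def)
    then show ?thesis using cramer_lemma_transpose[of i "row i C" G] by (simp add: row_def)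
  qed
  then show ?thesis by (simp add: trace_def sum_distrib_right)
qed

lemma det_has_derivative_invertible:
  fixes G :: "'a::real_normed_vector \<Rightarrow> real^'k^'k"
  assumes "\<And>i j. ((\<lambda>x. G x $ i $ j) has_derivative (\<lambda>w. G' w $ i $ j)) (at z)"
    and "invertible (G z)"
  shows "((\<lambda>x. det (G x)) has_derivative (\<lambda>w. det (G z) * trace (matrix_inv (G z) ** G' w))) (at z)"
proof -
  have "(\<Sum>i\<in>UNIV. det (\<chi> a b. if a = i then G' w $ a $ b else G z $ a $ b))
      = det (G z) * trace (matrix_inv (G z) ** G' w)" for w
  proof -
    have G': "(G' w ** matrix_inv (G z)) ** G z = G' w"
      unfolding matrix_mul_assoc[symmetric] matrix_inv_left[OF assms(2)] by (rule matrix_mul_rid)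
    have "(\<Sum>i\<in>UNIV. det (\<chi> a b. if a = i then G' w $ a $ b else G z $ a $ b))
        = (\<Sum>i\<in>UNIV. det (\<chi> a b. if a = i then ((G' w ** matrix_inv (G z)) ** G z) $ a $ b
                                     else G z $ a $ b))"
      by (simp only: G')
    also have "\<dots> = trace (G' w ** matrix_inv (G z)) * det (G z)"
      by (rule sum_det_replace_row_mult)
    finally show ?thesis
      by (simp only: trace_mul_sym[of "G' w"] mult.commute)
  qed
  with det_has_derivative_rowwise[OF assms(1)] show ?thesis by simp
qed

section \<open>Projection onto the normal space\<close>

definition normal_proj :: "real^'n^'k \<Rightarrow> real^'n^'n"
  where "normal_proj M = transpose M ** matrix_inv (M ** transpose M) ** M"

lemma orthonormal_expansion:
  fixes B :: "'a::euclidean_space set"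
  assumes fin: "finite B" and orth: "pairwise orthogonal B" and nrm: "\<And>e. e \<in> B \<Longrightarrow> norm e = 1"
    and x: "x \<in> span B"
  shows "(\<Sum>e\<in>B. (e \<bullet> x) *\<^sub>R e) = x"
proof -
  obtain c where xc: "x = (\<Sum>v\<in>B. c v *\<^sub>R v)" using x unfolding span_finite[OF fin] by auto
  have "e \<bullet> x = c e" if e: "e \<in> B" for e
  proof -
    have "e \<bullet> x = (\<Sum>v\<in>B. c v * (e \<bullet> v))" unfolding xc by (simp add: inner_sum_right)
    also have "\<dots> = c e * (e \<bullet> e)"
      using orth e unfolding pairwise_def orthogonal_def
      by (subst sum.remove[OF fin e]) (auto intro!: sum.neutral, metis)
    also have "e \<bullet> e = 1" using nrm[OF e] by (simp add: dot_square_norm)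
    finally show ?thesis by simp
  qed
  then show ?thesis using xc by simp
qed

lemma orthonormal_kernel_projection:
  fixes M :: "real^'n^'k"
  assumes inv: "invertible (M ** transpose M)"
    and B: "B \<subseteq> {v. M *v v = 0}" "span B = {v. M *v v = 0}"
    and orth: "pairwise orthogonal B" and nrm: "\<forall>e\<in>B. norm e = 1"
  shows "(\<Sum>e\<in>B. (e \<bullet> x) *\<^sub>R e) = x - normal_proj M *v x"
proof -
  define P where "P = normal_proj M"
  define Q where "Q x = (\<Sum>e\<in>B. (e \<bullet> x) *\<^sub>R e)" for x
  have "M *v (P *v x) = ((M ** transpose M) ** matrix_inv (M ** transpose M)) *v (M *v x)"
    unfolding P_def normal_proj_def by (simp add: matrix_vector_mul_assoc matrix_mul_assoc)
  then have span: "x - P *v x \<in> span B"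
    using B(2) matrix_inv_right[OF inv] by (simp add: matrix_vector_mult_diff_distrib)
  have "e \<bullet> (P *v x) = 0" if "e \<in> B" for e
  proof -
    have "e \<bullet> (P *v x) = e \<bullet> (transpose M *v ((matrix_inv (M ** transpose M) ** M) *v x))"
      unfolding P_def normal_proj_def by (simp add: matrix_vector_mul_assoc matrix_mul_assoc)
    also have "\<dots> = ((matrix_inv (M ** transpose M) ** M) *v x) \<bullet> (M *v e)"
      by (metis transpose_matrix_vector dot_lmul_matrix inner_commute)
    finally show ?thesis using that B(1) by auto
  qed
  then have "Q (P *v x) = 0" unfolding Q_def by simp
  moreover have "Q (x - P *v x) = x - P *v x"
    unfolding Q_def using orthonormal_expansion[OF _ orth _ span] pairwise_orthogonal_imp_finite[OF orth] nrm
    by blast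
  moreover have "Q x = Q (x - P *v x) + Q (P *v x)"
    unfolding Q_def by (simp add: inner_diff_right scaleR_diff_left sum_subtractf)
  ultimately show ?thesis by (simp add: Q_def P_def)
qed

lemma sum_orthonormal_kernel:
  fixes M :: "real^'n^'k" and L :: "real^'n \<Rightarrow> real^'n"
  assumes lin: "linear L" and inv: "invertible (M ** transpose M)"
    and B: "B \<subseteq> {v. M *v v = 0}" "span B = {v. M *v v = 0}"
    and orth: "pairwise orthogonal B" and nrm: "\<forall>e\<in>B. norm e = 1"
  shows "(\<Sum>e\<in>B. e \<bullet> L e) = trace (matrix L) - trace (matrix L ** normal_proj M)"
proof -
  have "(\<Sum>e\<in>B. e \<bullet> L e) = (\<Sum>e\<in>B. \<Sum>b\<in>Basis. (e \<bullet> b) * (L e \<bullet> b))"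
    by (simp add: euclidean_inner[symmetric])
  also have "\<dots> = (\<Sum>b\<in>Basis. \<Sum>e\<in>B. (e \<bullet> b) * (L e \<bullet> b))" by (rule sum.swap)
  also have "\<dots> = (\<Sum>b\<in>Basis. b \<bullet> L (\<Sum>e\<in>B. (e \<bullet> b) *\<^sub>R e))"
    using lin by (simp add: linear_sum linear_scale inner_sum_right inner_commute)
  also have "\<dots> = (\<Sum>b\<in>Basis. b \<bullet> L b - b \<bullet> L (normal_proj M *v b))"
    using lin by (simp add: orthonormal_kernel_projection[OF inv B orth nrm] linear_diff inner_diff_right)
  also have "\<dots> = (\<Sum>b\<in>Basis. b \<bullet> (matrix L *v b))
      - (\<Sum>b\<in>Basis. b \<bullet> ((matrix L ** normal_proj M) *v b))"
    unfolding sum_subtractf matrix_vector_mul_assoc[symmetric] matrix_vector_mul(2)[OF lin] ..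
  finally show ?thesis by (simp only: trace_eq_sum_Basis)
qed

section \<open>The Gram matrix along a tangent field\<close>

lemma frechet_derivative_eq_jacobian:
  fixes f :: "real^'n \<Rightarrow> real^'m"
  assumes "f differentiable (at x)"
  shows "frechet_derivative f (at x) v = jacobian f (at x) *v v"
proof -
  have "linear (frechet_derivative f (at x))"
    using assms frechet_derivative_works has_derivative_linear by blast
  from matrix_vector_mul(2)[OF this] show ?thesis unfolding jacobian_def by metis
qed

definition gram :: "(real^'n \<Rightarrow> real^'k) \<Rightarrow> real^'n \<Rightarrow> real^'k^'k"
  where "gram J x = jacobian J (at x) ** transpose (jacobian J (at x))"

lemma wedge_norm_eq_gram: "wedge_norm J x = sqrt (det (gram J x))"
  unfolding wedge_norm_def gram_def grad_comp_def jacobian_def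
  by (simp add: inner_vec_def matrix_matrix_mult_def transpose_def matrix_def)

definition jacobian_derivative :: "(real^'n \<Rightarrow> real^'k) \<Rightarrow> real^'n \<Rightarrow> real^'n \<Rightarrow> real^'n^'k"
  where "jacobian_derivative J z w = (\<chi> i j. second_derivative J z (axis j 1) w $ i)"

lemma jacobian_has_derivative:
  assumes "smooth J"
  shows "((\<lambda>x. jacobian J (at x) $ i $ j) has_derivative (\<lambda>w. jacobian_derivative J z w $ i $ j)) (at z)"
  using bounded_linear.has_derivative[OF bounded_linear_vec_nth
      smooth_second_derivative_has_derivative[OF assms, of "axis j 1"]]
  by (simp add: jacobian_def matrix_def jacobian_derivative_def)

lemma gram_has_derivative:
  assumes "smooth J"
  shows "((\<lambda>x. gram J x $ i $ j) has_derivative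
    (\<lambda>w. (jacobian_derivative J z w ** transpose (jacobian J (at z))
          + jacobian J (at z) ** transpose (jacobian_derivative J z w)) $ i $ j)) (at z)"
proof -
  let ?M = "\<lambda>x. jacobian J (at x)" and ?DM = "jacobian_derivative J z"
  have "gram J x $ i $ j = (\<Sum>l\<in>UNIV. ?M x $ i $ l * ?M x $ j $ l)" for x
    by (simp add: gram_def matrix_matrix_mult_def transpose_def)
  moreover have "(?DM w ** transpose (?M z) + ?M z ** transpose (?DM w)) $ i $ j
      = (\<Sum>l\<in>UNIV. ?M z $ i $ l * ?DM w $ j $ l + ?DM w $ i $ l * ?M z $ j $ l)" for w
    by (simp add: matrix_matrix_mult_def transpose_def sum.distrib mult.commute add.commute)
  moreover have "((\<lambda>x. \<Sum>l\<in>UNIV. ?M x $ i $ l * ?M x $ j $ l) has_derivative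
      (\<lambda>w. \<Sum>l\<in>UNIV. ?M z $ i $ l * ?DM w $ j $ l + ?DM w $ i $ l * ?M z $ j $ l)) (at z)"
    by (intro has_derivative_sum has_derivative_mult jacobian_has_derivative[OF assms])
  ultimately show ?thesis by simp
qed

lemma jacobian_derivative_tangent_field:
  fixes J :: "real^'n \<Rightarrow> real^'k" and Y :: "real^'n \<Rightarrow> real^'n"
  assumes J: "smooth J" and Y: "Y differentiable (at z)"
    and tangent: "\<And>x. frechet_derivative J (at x) (Y x) = 0"
  shows "jacobian_derivative J z (Y z) = - (jacobian J (at z) ** jacobian Y (at z))"
proof -
  have "second_derivative J z (axis j 1) (Y z) = - ((jacobian J (at z) ** jacobian Y (at z)) *v axis j 1)"
    for j
    using tangent_field_second_derivative[OF J Y tangent, of "axis j 1"]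
    by (simp add: frechet_derivative_eq_jacobian[OF smooth_differentiable[OF J]]
        frechet_derivative_eq_jacobian[OF Y] matrix_vector_mul_assoc)
  then show ?thesis
    by (simp add: vec_eq_iff jacobian_derivative_def matrix_vector_mult_basis column_def)
qed

lemma trace_gram_inverse_sandwich:
  fixes M :: "real^'n^'k" and L :: "real^'n^'n"
  defines "A \<equiv> M ** L ** transpose M"
  assumes inv: "invertible (M ** transpose M)"
  shows "trace (matrix_inv (M ** transpose M) ** (A + transpose A)) = 2 * trace (L ** normal_proj M)"
proof -
  define Gi where "Gi = matrix_inv (M ** transpose M)"
  have Gi_sym: "transpose Gi = Gi"
    unfolding Gi_def by (rule transpose_matrix_inv_symmetric[OF _ inv]) (simp add: matrix_transpose_mul)
  have "trace (Gi ** A) = trace ((Gi ** M ** L) ** transpose M)"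
    by (simp add: A_def matrix_mul_assoc)
  also have "\<dots> = trace (transpose M ** (Gi ** M ** L))"
    by (rule trace_mul_sym)
  also have "\<dots> = trace ((transpose M ** Gi ** M) ** L)"
    by (simp add: matrix_mul_assoc)
  also have "\<dots> = trace (L ** normal_proj M)"
    by (simp add: trace_mul_sym[of _ L] normal_proj_def Gi_def)
  finally have trA: "trace (Gi ** A) = trace (L ** normal_proj M)" .
  have "trace (Gi ** transpose A) = trace (transpose (A ** Gi))"
    by (simp add: matrix_transpose_mul Gi_sym)
  also have "\<dots> = trace (Gi ** A)"
    by (simp only: trace_transpose trace_mul_sym[of A])
  finally show ?thesis
    by (simp add: Gi_def[symmetric] matrix_add_ldistrib trace_add trA)
qed

lemma det_gram_derivative_tangent_field:
  fixes J :: "real^'n \<Rightarrow> real^'k" and Y :: "real^'n \<Rightarrow> real^'n"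
  assumes J: "smooth J" and Y: "Y differentiable (at z)"
    and tangent: "\<And>x. frechet_derivative J (at x) (Y x) = 0"
    and reg: "det (gram J z) \<noteq> 0"
  shows "\<exists>D. ((\<lambda>x. det (gram J x)) has_derivative D) (at z) \<and>
    D (Y z) = - 2 * trace (jacobian Y (at z) ** normal_proj (jacobian J (at z))) * det (gram J z)"
proof -
  define M where "M = jacobian J (at z)"
  define L where "L = jacobian Y (at z)"
  define A where "A = M ** L ** transpose M"
  have inv: "invertible (M ** transpose M)"
    using reg invertible_det_nz by (auto simp: gram_def M_def)
  have "transpose A = M ** transpose L ** transpose M"
    by (simp add: A_def matrix_transpose_mul matrix_mul_assoc)
  then have DG: "jacobian_derivative J z (Y z) ** transpose M
      + M ** transpose (jacobian_derivative J z (Y z)) = - (A + transpose A)"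
    unfolding jacobian_derivative_tangent_field[OF J Y tangent] M_def[symmetric] L_def[symmetric]
    by (simp add: A_def matrix_mul_lneg matrix_mul_rneg transpose_neg matrix_transpose_mul matrix_mul_assoc)
  let ?D = "\<lambda>w. det (gram J z) * trace (matrix_inv (gram J z) **
      (jacobian_derivative J z w ** transpose M + M ** transpose (jacobian_derivative J z w)))"
  have "((\<lambda>x. det (gram J x)) has_derivative ?D) (at z)"
    using det_has_derivative_invertible[OF gram_has_derivative[OF J]] inv
    by (simp add: M_def gram_def)
  moreover have "?D (Y z) = - 2 * trace (L ** normal_proj M) * det (gram J z)"
    unfolding DG gram_def M_def[symmetric] A_def
    by (simp only: matrix_mul_rneg trace_neg trace_gram_inverse_sandwich[OF inv]) simp
  ultimately show ?thesis unfolding L_def M_def by blast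
qed

text \<open>\<open>sqrt\<close> is extended to negative reals as an odd function, so the formula also holds for \<open>x < 0\<close>.\<close>

lemma DERIV_sqrt_nonzero:
  fixes x :: real
  assumes "x \<noteq> 0"
  shows "DERIV sqrt x :> sqrt x / (2 * x)"
proof (rule DERIV_real_sqrt_generic[OF assms])
  have "sqrt x * sqrt x = \<bar>x\<bar>" by (metis real_sqrt_mult real_sqrt_abs2)
  then show "x > 0 \<Longrightarrow> sqrt x / (2 * x) = inverse (sqrt x) / 2"
    and "x < 0 \<Longrightarrow> sqrt x / (2 * x) = - inverse (sqrt x) / 2"
    using assms by (auto simp: field_simps)
qed

lemma DERIV_sqrt_inverse_sqrt:
  fixes s :: real
  assumes "s \<noteq> 0"
  shows "DERIV (\<lambda>s. sqrt (inverse (sqrt s))) s :> - sqrt (inverse (sqrt s)) / (4 * s)"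
proof -
  define r where "r = inverse (sqrt s)"
  have r: "r \<noteq> 0" "r * sqrt s = 1" using assms by (simp_all add: r_def)
  have "DERIV inverse (sqrt s) :> - (r ^ 2)"
    using DERIV_inverse[of "sqrt s"] assms by (simp add: r_def numeral_2_eq_2)
  from DERIV_chain2[OF this DERIV_sqrt_nonzero[OF assms]]
  have "DERIV (\<lambda>s. inverse (sqrt s)) s :> - (r ^ 2) * (sqrt s / (2 * s))" .
  from DERIV_chain2[OF DERIV_sqrt_nonzero[OF r(1)[unfolded r_def]] this]
  have "DERIV (\<lambda>s. sqrt (inverse (sqrt s))) s :> sqrt r / (2 * r) * (- (r ^ 2) * (sqrt s / (2 * s)))"
    by (simp only: r_def)
  moreover have "sqrt r / (2 * r) * (- (r ^ 2) * (sqrt s / (2 * s))) = - sqrt r / (4 * s)"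
    using r assms by (simp add: field_simps power2_eq_square)
  ultimately show ?thesis by (simp add: r_def)
qed

lemma sqrt_rho_derivative_tangent_field:
  fixes J :: "real^'n \<Rightarrow> real^'k" and Y :: "real^'n \<Rightarrow> real^'n"
  assumes J: "smooth J" and Y: "Y differentiable (at z)"
    and tangent: "\<And>x. frechet_derivative J (at x) (Y x) = 0"
    and reg: "wedge_norm J z \<noteq> 0"
  shows "\<exists>D. ((\<lambda>x. sqrt (rho J x)) has_derivative D) (at z) \<and>
    D (Y z) = trace (jacobian Y (at z) ** normal_proj (jacobian J (at z))) / 2 * sqrt (rho J z)"
proof -
  let ?\<tau> = "trace (jacobian Y (at z) ** normal_proj (jacobian J (at z)))"
  have sqrt_rho: "sqrt (rho J x) = sqrt (inverse (sqrt (det (gram J x))))" for x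
    by (simp add: rho_def wedge_norm_eq_gram)
  have reg': "det (gram J z) \<noteq> 0" using reg by (simp add: wedge_norm_eq_gram)
  obtain D where D: "((\<lambda>x. det (gram J x)) has_derivative D) (at z)"
    "D (Y z) = - 2 * ?\<tau> * det (gram J z)"
    using det_gram_derivative_tangent_field[OF J Y tangent reg'] by blast
  have "((\<lambda>x. sqrt (rho J x)) has_derivative
      (\<lambda>w. D w * (- sqrt (rho J z) / (4 * det (gram J z))))) (at z)"
    unfolding sqrt_rho using DERIV_compose_FDERIV[OF DERIV_sqrt_inverse_sqrt[OF reg'] D(1)] .
  moreover have "D (Y z) * (- sqrt (rho J z) / (4 * det (gram J z))) = ?\<tau> / 2 * sqrt (rho J z)"
    using reg' by (simp add: D(2) field_simps)
  ultimately show ?thesis by blast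
qed

section \<open>Divergence and flow on the level set\<close>

lemma div_euc_eq_trace:
  assumes "Y differentiable (at z)"
  shows "div_euc Y z = trace (jacobian Y (at z))"
  unfolding div_euc_def trace_eq_sum_Basis
  by (simp add: frechet_derivative_eq_jacobian[OF assms] inner_commute)

lemma div_level_eq:
  fixes J :: "real^'n \<Rightarrow> real^'k" and Y :: "real^'n \<Rightarrow> real^'n"
  assumes J: "J differentiable (at z)" and Y: "Y differentiable (at z)"
    and reg: "det (gram J z) \<noteq> 0"
  shows "div_level J Y z = div_euc Y z - trace (jacobian Y (at z) ** normal_proj (jacobian J (at z)))"
proof -
  define M where "M = jacobian J (at z)"
  have T: "tangent_space J z = {v. M *v v = 0}"
    by (simp add: tangent_space_def M_def frechet_derivative_eq_jacobian[OF J])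
  have "subspace {v. M *v v = 0}"
    by (auto simp: subspace_def matrix_vector_right_distrib matrix_vector_mult_scaleR)
  then have "\<exists>B. B \<subseteq> tangent_space J z \<and> pairwise orthogonal B
      \<and> (\<forall>e\<in>B. norm e = 1) \<and> span B = tangent_space J z"
    unfolding T by (metis orthonormal_basis_subspace)
  then have B: "tangent_onb J z \<subseteq> tangent_space J z \<and> pairwise orthogonal (tangent_onb J z)
      \<and> (\<forall>e\<in>tangent_onb J z. norm e = 1) \<and> span (tangent_onb J z) = tangent_space J z"
    unfolding tangent_onb_def by (rule someI_ex)
  have inv: "invertible (M ** transpose M)"
    using reg by (simp add: gram_def M_def invertible_det_nz)
  have lin: "linear (frechet_derivative Y (at z))"
    using Y frechet_derivative_works has_derivative_linear by blast
  have "div_level J Y z = (\<Sum>e\<in>tangent_onb J z. e \<bullet> frechet_derivative Y (at z) e)"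
    by (simp add: div_level_def)
  also have "\<dots> = trace (jacobian Y (at z)) - trace (jacobian Y (at z) ** normal_proj M)"
    unfolding jacobian_def by (rule sum_orthonormal_kernel[OF lin inv]) (use B T in auto)
  finally show ?thesis by (simp add: div_euc_eq_trace[OF Y] M_def)
qed

lemma vf_level_eq:
  assumes "is_flow Y Phi" and "(f has_derivative Df) (at z)"
  shows "vf_level Phi f z = Df (Y z)"
proof -
  have "((\<lambda>t. Phi t z) has_derivative (\<lambda>t. t *\<^sub>R Y z)) (at 0)"
    using assms(1) unfolding is_flow_def has_vector_derivative_def by metis
  moreover have "(f has_derivative Df) (at (Phi 0 z))"
    using assms unfolding is_flow_def by simp
  ultimately have "((\<lambda>t. f (Phi t z)) has_derivative (\<lambda>t. Df (t *\<^sub>R Y z))) (at 0)"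
    by (rule has_derivative_compose)
  then have "((\<lambda>t. f (Phi t z)) has_vector_derivative Df (Y z)) (at 0)"
    unfolding has_vector_derivative_def
    using has_derivative_linear[OF assms(2)] by (simp add: linear_scale)
  then show ?thesis unfolding vf_level_def by (rule vector_derivative_at)
qed

theorem mainTheorem12:
  fixes J :: "real^'n \<Rightarrow> real^'k" and Y :: "real^'n \<Rightarrow> real^'n"
    and Phi :: "real \<Rightarrow> real^'n \<Rightarrow> real^'n"
    and hbar :: real and u :: "real^'n \<Rightarrow> complex" and z :: "real^'n"
  assumes J_smooth: "smooth J"
    and crit_null: "{x. wedge_norm J x = 0} \<in> null_sets lborel"
    and Y_smooth: "smooth Y"
    and Y_complete: "is_flow Y Phi"
    and Y_tangent: "\<forall>x. frechet_derivative J (at x) (Y x) = 0"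
    and hbar: "hbar \<noteq> 0"
    and u_smooth: "smooth u" and u_supp: "compact (supp u)"
    and z_reg: "wedge_norm J z \<noteq> 0"
  shows "complex_of_real (inverse (sqrt (rho J z))) *
           (- \<i> * complex_of_real hbar *
             (vf_level Phi (\<lambda>x. complex_of_real (sqrt (rho J x)) * u x) z
              + complex_of_real (div_level J Y z / 2)
                * (complex_of_real (sqrt (rho J z)) * u z)))
       = - \<i> * complex_of_real hbar *
           (frechet_derivative u (at z) (Y z) + complex_of_real (div_euc Y z / 2) * u z)"
proof -
  let ?\<tau> = "trace (jacobian Y (at z) ** normal_proj (jacobian J (at z)))"
  let ?Du = "frechet_derivative u (at z)"
  have Y: "Y differentiable (at z)" by (rule smooth_differentiable[OF Y_smooth])
  obtain D where D: "((\<lambda>x. sqrt (rho J x)) has_derivative D) (at z)"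
    "D (Y z) = ?\<tau> / 2 * sqrt (rho J z)"
    using sqrt_rho_derivative_tangent_field[OF J_smooth Y] Y_tangent z_reg by blast
  have "((\<lambda>x. complex_of_real (sqrt (rho J x)) * u x) has_derivative
      (\<lambda>w. complex_of_real (sqrt (rho J z)) * ?Du w + complex_of_real (D w) * u z)) (at z)"
    by (intro has_derivative_mult has_derivative_of_real D(1) smooth_has_derivative[OF u_smooth])
  then have vf: "vf_level Phi (\<lambda>x. complex_of_real (sqrt (rho J x)) * u x) z
      = complex_of_real (sqrt (rho J z)) * ?Du (Y z) + complex_of_real (?\<tau> / 2 * sqrt (rho J z)) * u z"
    by (simp add: vf_level_eq[OF Y_complete] D(2))
  have div: "div_level J Y z = div_euc Y z - ?\<tau>"
    using z_reg by (intro div_level_eq smooth_differentiable J_smooth Y) (simp add: wedge_norm_eq_gram)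
  have "sqrt (rho J z) \<noteq> 0"
    using z_reg by (simp add: rho_def)
  then show ?thesis
    unfolding vf div by (simp add: field_simps)
qed

end
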